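(* Let $\gamma>0$ and $\theta\in\mathbb R$. For each $L\ge2$ let $w_1,\dots,w_L\in\mathbb R$ with $|w_j|\ge2\gamma$ for all $j$, and consider on $\mathcal F(\mathbb C^L)$ $$\mathbf H_L=\sum_{j=1}^{L-1}w_j\,i{\mathfrak b}_{2j}{\mathfrak b}_{2j+1}+w_L\,i{\mathfrak b}_{2L}{\mathfrak b}_1 .$$ Then $\mathbf H_L$ has a spectral gap above its ground state energy that is bounded below uniformly in the length $L$ of the chain.
   Context: $\mathcal F(\mathbb C^L)$ is the fermionic Fock space with CAR operators ${\mathfrak a}_j$, $j=1,\dots,L$. Majorana operators: ${\mathfrak b}_{2j-1}=e^{i\theta/2}{\mathfrak a}_j+e^{-i\theta/2}{\mathfrak a}_j^*$, ${\mathfrak b}_{2j}=-ie^{i\theta/2}{\mathfrak a}_j+ie^{-i\theta/2}{\mathfrak a}_j^*$; in terms of these, $\mathbf H_L$ is the closed (periodic) Kitaev chain $\sum_{j=1}^{L-1}w_j[-({\mathfrak a}_j^*{\mathfrak a}_{j+1}+{\mathfrak a}_{j+1}^*{\mathfrak a}_j)+e^{i\theta}{\mathfrak a}_j{\mathfrak a}_{j+1}+e^{-i\theta}{\mathfrak a}_{j+1}^*{\mathfrak a}_j^*]+w_L[-({\mathfrak a}_L^*{\mathfrak a}_1+{\mathfrak a}_1^*{\mathfrak a}_L)+e^{i\theta}{\mathfrak a}_L{\mathfrak a}_1+e^{-i\theta}{\mathfrak a}_1^*{\mathfrak a}_L^*]$ with site-dependent couplings. The spectral gap above the ground state energy is the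 distance between the lowest eigenvalue and the next distinct eigenvalue. *)

theory Defs
  imports "Jordan_Normal_Form.Schur_Decomposition"
begin

text \<open>Fock space F(C^L) realised as C^(2^L): basis vector n < 2^L is the occupation
  state whose set of occupied sites is {j \<in> {1..L}. bit n (j-1)}.\<close>

definition annih :: "nat \<Rightarrow> nat \<Rightarrow> complex mat" where
  "annih L j = mat (2^L) (2^L) (\<lambda>(r, c).
     if bit c (j - 1) \<and> r = c - 2^(j - 1)
     then (-1) ^ card {k. k < j - 1 \<and> bit c k} else 0)"

definition creat :: "nat \<Rightarrow> nat \<Rightarrow> complex mat" where
  "creat L j = mat_adjoint (annih L j)"

definition majorana :: "real \<Rightarrow> nat \<Rightarrow> nat \<Rightarrow> complex mat" where
  "majorana \<theta> L k =
    (let j = (k + 1) div 2;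
         e = cis (\<theta> / 2); e' = cis (- \<theta> / 2)
     in if odd k then e \<cdot>\<^sub>m annih L j + e' \<cdot>\<^sub>m creat L j
        else (- \<i> * e) \<cdot>\<^sub>m annih L j + (\<i> * e') \<cdot>\<^sub>m creat L j)"

definition mat_sum :: "nat \<Rightarrow> (nat \<Rightarrow> complex mat) \<Rightarrow> nat list \<Rightarrow> complex mat" where
  "mat_sum n f xs = foldr (\<lambda>j acc. f j + acc) xs (0\<^sub>m n n)"

definition kitaev_H :: "real \<Rightarrow> nat \<Rightarrow> (nat \<Rightarrow> real) \<Rightarrow> complex mat" where
  "kitaev_H \<theta> L w =
     mat_sum (2^L) (\<lambda>j. (complex_of_real (w j) * \<i>) \<cdot>\<^sub>m
                         (majorana \<theta> L (2*j) * majorana \<theta> L (2*j + 1))) [1..<L]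
     + (complex_of_real (w L) * \<i>) \<cdot>\<^sub>m (majorana \<theta> L (2*L) * majorana \<theta> L 1)"

definition real_spec :: "complex mat \<Rightarrow> real set" where
  "real_spec H = {x. eigenvalue H (complex_of_real x)}"

definition ground_energy :: "complex mat \<Rightarrow> real" where
  "ground_energy H = Min (real_spec H)"

definition spectral_gap :: "complex mat \<Rightarrow> real" where
  "spectral_gap H = Min (real_spec H - {ground_energy H}) - ground_energy H"

end

theory Submission
  imports Defs
begin

(* Put A_j = i b_2j b_(2j+1) for j < L and A_L = i b_2L b_1, so that H_L = sum_j w_j A_j.
   By the Majorana relations the A_j are commuting involutions, and b_2j anticommutes with A_j
   while commuting with every A_k, k ~= j.  Hence each sign pattern s in {-1,1}^L is realised
   by a common eigenvector, and the spectrum of H_L is exactly {sum_j w_j s_j}.  The ground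
   energy is -sum_j |w_j|, and every other eigenvalue flips at least one sign, which costs
   2 |w_j| >= 4 gamma. *)

section \<open>Sign sums\<close>

definition sign_sums :: "(nat \<Rightarrow> real) \<Rightarrow> nat set \<Rightarrow> real set" where
  "sign_sums w K = {\<Sum>j\<in>K. w j * s j | s. s \<in> K \<rightarrow> {-1, 1}}"

lemma finite_sign_sums:
  assumes "finite K"
  shows "finite (sign_sums w K)"
proof (rule finite_subset)
  show "sign_sums w K \<subseteq> (\<lambda>s. \<Sum>j\<in>K. w j * s j) ` (K \<rightarrow>\<^sub>E {-1, 1})"
  proof
    fix x assume "x \<in> sign_sums w K"
    then obtain s where s: "s \<in> K \<rightarrow> {-1, 1}" and x: "x = (\<Sum>j\<in>K. w j * s j)"
      unfolding sign_sums_def by blast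
    have "x = (\<Sum>j\<in>K. w j * restrict s K j)" unfolding x by (rule sum.cong) auto
    moreover have "restrict s K \<in> K \<rightarrow>\<^sub>E {-1, 1}" using s by auto
    ultimately show "x \<in> (\<lambda>s. \<Sum>j\<in>K. w j * s j) ` (K \<rightarrow>\<^sub>E {-1, 1})" by blast
  qed
qed (use assms in \<open>intro finite_imageI finite_PiE, auto\<close>)

lemma sign_sum_eq_excess:
  fixes w s :: "nat \<Rightarrow> real"
  shows "(\<Sum>j\<in>K. w j * s j) = - (\<Sum>j\<in>K. \<bar>w j\<bar>) + (\<Sum>j\<in>K. w j * s j + \<bar>w j\<bar>)"
  by (simp add: sum.distrib)

lemma sign_term_excess:
  fixes w s :: "nat \<Rightarrow> real"
  assumes "s \<in> K \<rightarrow> {-1, 1}" "j \<in> K"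
  shows "w j * s j + \<bar>w j\<bar> \<in> {0, 2 * \<bar>w j\<bar>}"
proof -
  have "s j = -1 \<or> s j = 1" using assms by auto
  thus ?thesis by (auto simp: abs_if)
qed

lemma Min_sign_sums:
  assumes "finite K"
  shows "Min (sign_sums w K) = - (\<Sum>j\<in>K. \<bar>w j\<bar>)"
proof (rule Min_eqI)
  show "finite (sign_sums w K)" using assms by (rule finite_sign_sums)
  define s where "s j = (if w j > 0 then -1 else 1 :: real)" for j
  have "- (\<Sum>j\<in>K. \<bar>w j\<bar>) = (\<Sum>j\<in>K. w j * s j)"
    by (simp add: s_def sum_negf[symmetric]) (rule sum.cong, auto)
  moreover have "s \<in> K \<rightarrow> {-1, 1}" by (simp add: s_def)
  ultimately show "- (\<Sum>j\<in>K. \<bar>w j\<bar>) \<in> sign_sums w K" unfolding sign_sums_def by blast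
next
  fix x assume "x \<in> sign_sums w K"
  then obtain s where s: "s \<in> K \<rightarrow> {-1, 1}" and x: "x = (\<Sum>j\<in>K. w j * s j)"
    unfolding sign_sums_def by blast
  have "0 \<le> (\<Sum>j\<in>K. w j * s j + \<bar>w j\<bar>)"
    using sign_term_excess[where w = w, OF s] by (intro sum_nonneg) fastforce
  thus "- (\<Sum>j\<in>K. \<bar>w j\<bar>) \<le> x" using sign_sum_eq_excess[of w s K] x by linarith
qed

lemma sign_sums_gap:
  assumes "finite K" "\<forall>j\<in>K. c \<le> \<bar>w j\<bar>"
    and "x \<in> sign_sums w K" "x \<noteq> Min (sign_sums w K)"
  shows "Min (sign_sums w K) + 2 * c \<le> x"
proof -
  obtain s where s: "s \<in> K \<rightarrow> {-1, 1}" and x: "x = (\<Sum>j\<in>K. w j * s j)"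
    using assms(3) unfolding sign_sums_def by blast
  note terms = sign_term_excess[where w = w, OF s]
  have excess: "x = Min (sign_sums w K) + (\<Sum>j\<in>K. w j * s j + \<bar>w j\<bar>)"
    using sign_sum_eq_excess[of w s K] x Min_sign_sums[OF assms(1)] by simp
  have "\<exists>k\<in>K. w k * s k + \<bar>w k\<bar> \<noteq> 0"
  proof (rule ccontr)
    assume "\<not> ?thesis"
    hence "x = Min (sign_sums w K)" using excess by simp
    thus False using assms(4) by simp
  qed
  then obtain k where k: "k \<in> K" and "w k * s k + \<bar>w k\<bar> \<noteq> 0" by blast
  hence "2 * c \<le> w k * s k + \<bar>w k\<bar>" using terms[OF k] assms(2) by auto
  also have "\<dots> \<le> (\<Sum>j\<in>K. w j * s j + \<bar>w j\<bar>)"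
    using terms by (intro member_le_sum[OF k] assms(1)) fastforce+
  also have "\<dots> = x - Min (sign_sums w K)" using excess by simp
  finally show ?thesis by simp
qed

lemma Min_sign_sums_add_in_sign_sums:
  assumes "finite K" "k \<in> K"
  shows "Min (sign_sums w K) + 2 * \<bar>w k\<bar> \<in> sign_sums w K"
proof -
  define s where "s j = (if (w j > 0) = (j \<noteq> k) then -1 else 1 :: real)" for j
  have "(\<Sum>j\<in>K. w j * s j) = (\<Sum>j\<in>K. - \<bar>w j\<bar>) + 2 * \<bar>w k\<bar>"
  proof -
    have "(\<Sum>j\<in>K. w j * s j) = (\<Sum>j\<in>K. - \<bar>w j\<bar> + (if j = k then 2 * \<bar>w k\<bar> else 0))"
      by (rule sum.cong) (auto simp: s_def)
    also have "\<dots> = (\<Sum>j\<in>K. - \<bar>w j\<bar>) + 2 * \<bar>w k\<bar>"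
      using assms by (simp only: sum.distrib sum.delta if_True)
    finally show ?thesis .
  qed
  moreover have "s \<in> K \<rightarrow> {-1, 1}" by (simp add: s_def)
  ultimately have "- (\<Sum>j\<in>K. \<bar>w j\<bar>) + 2 * \<bar>w k\<bar> \<in> sign_sums w K"
    unfolding sign_sums_def by (auto simp: sum_negf intro!: exI[of _ s])
  thus ?thesis by (simp only: Min_sign_sums[OF assms(1)])
qed

lemma spectral_gap_ge_if_real_spec_sign_sums:
  assumes "real_spec H = sign_sums w K" "finite K" "k \<in> K"
    and "0 < c" "\<forall>j\<in>K. c \<le> \<bar>w j\<bar>"
  shows "real_spec H - {ground_energy H} \<noteq> {} \<and> 2 * c \<le> spectral_gap H"
proof -
  let ?S = "sign_sums w K"
  have "Min ?S + 2 * \<bar>w k\<bar> \<in> ?S - {Min ?S}"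
    using Min_sign_sums_add_in_sign_sums[OF assms(2,3)] assms(3-5) by auto
  hence nonempty: "?S - {Min ?S} \<noteq> {}" by blast
  have "Min (?S - {Min ?S}) \<in> ?S - {Min ?S}"
    using finite_sign_sums[OF assms(2)] nonempty by (intro Min_in) auto
  hence "Min ?S + 2 * c \<le> Min (?S - {Min ?S})"
    using sign_sums_gap[OF assms(2,5)] by blast
  thus ?thesis using nonempty
    unfolding spectral_gap_def ground_energy_def assms(1) by simp
qed

section \<open>Weighted sums of commuting involutions\<close>

lemma smult_mat_mult_vec:
  "M \<in> carrier_mat nr nc \<Longrightarrow> v \<in> carrier_vec nc \<Longrightarrow> (a \<cdot>\<^sub>m M) *\<^sub>v v = (a::complex) \<cdot>\<^sub>v (M *\<^sub>v v)"
  by (rule eq_vecI) (auto simp: scalar_prod_def sum_distrib_left algebra_simps)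

lemma smult_vec_right_cancel:
  assumes "v \<in> carrier_vec n" "v \<noteq> 0\<^sub>v n" "a \<cdot>\<^sub>v v = b \<cdot>\<^sub>v v"
  shows "(a::complex) = b"
proof -
  obtain i where i: "i < n" "v $ i \<noteq> 0"
    using assms(1,2) by (metis eq_vecI carrier_vecD index_zero_vec(1,2))
  have "(a \<cdot>\<^sub>v v) $ i = (b \<cdot>\<^sub>v v) $ i" using assms(3) by simp
  thus ?thesis using i assms(1) by simp
qed

lemma mat_sum_Nil [simp]: "mat_sum N f [] = 0\<^sub>m N N"
  by (simp add: mat_sum_def)

lemma mat_sum_Cons [simp]: "mat_sum N f (j # js) = f j + mat_sum N f js"
  by (simp add: mat_sum_def)

lemma mat_sum_carrier:
  "(\<And>j. j \<in> set js \<Longrightarrow> f j \<in> carrier_mat N N) \<Longrightarrow> mat_sum N f js \<in> carrier_mat N N"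
  by (induction js) auto

lemma mat_sum_snoc:
  assumes "\<And>j. j \<in> set (xs @ [x]) \<Longrightarrow> f j \<in> carrier_mat N N"
  shows "mat_sum N f (xs @ [x]) = mat_sum N f xs + f x"
  using assms
proof (induction xs)
  case (Cons y xs)
  have "mat_sum N f xs \<in> carrier_mat N N" using Cons.prems by (intro mat_sum_carrier) auto
  thus ?case using Cons by (simp add: assoc_add_mat[of "f y" N N])
qed simp

lemma mat_sum_cong: "(\<And>j. j \<in> set js \<Longrightarrow> f j = g j) \<Longrightarrow> mat_sum N f js = mat_sum N g js"
  by (induction js) auto

locale commuting_involutions =
  fixes N :: nat and A :: "nat \<Rightarrow> complex mat" and J :: "nat set"
  assumes A_carrier [simp]: "j \<in> J \<Longrightarrow> A j \<in> carrier_mat N N"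
    and A_square: "j \<in> J \<Longrightarrow> A j * A j = 1\<^sub>m N"
    and A_commute: "j \<in> J \<Longrightarrow> k \<in> J \<Longrightarrow> A j * A k = A k * A j"
begin

lemma dim_A [simp]: "j \<in> J \<Longrightarrow> dim_row (A j) = N" "j \<in> J \<Longrightarrow> dim_col (A j) = N"
  using A_carrier by (auto simp del: A_carrier)

definition weighted_sum :: "(nat \<Rightarrow> real) \<Rightarrow> nat list \<Rightarrow> complex mat" where
  "weighted_sum w js = mat_sum N (\<lambda>j. complex_of_real (w j) \<cdot>\<^sub>m A j) js"

lemma weighted_sum_carrier: "set js \<subseteq> J \<Longrightarrow> weighted_sum w js \<in> carrier_mat N N"
  unfolding weighted_sum_def by (rule mat_sum_carrier) auto

lemma weighted_sum_commute:
  "set js \<subseteq> J \<Longrightarrow> k \<in> J \<Longrightarrow> weighted_sum w js * A k = A k * weighted_sum w js"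
proof (induction js)
  case Nil thus ?case by (simp add: weighted_sum_def)
next
  case (Cons j js)
  have j: "A j \<in> carrier_mat N N" and k: "A k \<in> carrier_mat N N" using Cons.prems by auto
  have wj: "complex_of_real (w j) \<cdot>\<^sub>m A j \<in> carrier_mat N N" using j by simp
  have ws: "weighted_sum w js \<in> carrier_mat N N" using Cons.prems by (intro weighted_sum_carrier) auto
  have "weighted_sum w (j # js) * A k = complex_of_real (w j) \<cdot>\<^sub>m (A j * A k) + weighted_sum w js * A k"
    using add_mult_distrib_mat[OF wj ws k] mult_smult_assoc_mat[OF j k]
    by (simp add: weighted_sum_def)
  also have "\<dots> = complex_of_real (w j) \<cdot>\<^sub>m (A k * A j) + A k * weighted_sum w js"
    using Cons A_commute[of j k] by simp
  also have "\<dots> = A k * weighted_sum w (j # js)"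
    using mult_add_distrib_mat[OF k wj ws] mult_smult_distrib[OF k j]
    by (simp add: weighted_sum_def)
  finally show ?case .
qed

lemma weighted_sum_Cons_mult_vec:
  assumes "set (j # js) \<subseteq> J" "v \<in> carrier_vec N"
  shows "weighted_sum w (j # js) *\<^sub>v v
       = complex_of_real (w j) \<cdot>\<^sub>v (A j *\<^sub>v v) + weighted_sum w js *\<^sub>v v"
proof -
  have j: "A j \<in> carrier_mat N N" using assms by auto
  have ws: "weighted_sum w js \<in> carrier_mat N N" using assms by (intro weighted_sum_carrier) auto
  show ?thesis
    using add_mult_distrib_mat_vec[OF smult_carrier_mat[OF j] ws assms(2)] smult_mat_mult_vec[OF j assms(2)]
    by (simp add: weighted_sum_def)
qed

definition sign_projection :: "nat \<Rightarrow> real \<Rightarrow> complex vec \<Rightarrow> complex vec" where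
  "sign_projection j \<sigma> v = (1/2) \<cdot>\<^sub>v (v + complex_of_real \<sigma> \<cdot>\<^sub>v (A j *\<^sub>v v))"

lemma sign_projection_carrier: "j \<in> J \<Longrightarrow> v \<in> carrier_vec N \<Longrightarrow> sign_projection j \<sigma> v \<in> carrier_vec N"
  unfolding sign_projection_def by (simp add: mult_mat_vec_carrier[OF A_carrier])

lemma sign_projection_nonzero:
  assumes "j \<in> J" "v \<in> carrier_vec N" "v \<noteq> 0\<^sub>v N"
  obtains \<sigma> where "\<sigma> \<in> {-1, 1}" "sign_projection j \<sigma> v \<noteq> 0\<^sub>v N"
proof (cases "sign_projection j 1 v = 0\<^sub>v N")
  case True
  have "sign_projection j 1 v + sign_projection j (-1) v = v"
    using assms by (intro eq_vecI) (auto simp: sign_projection_def field_simps)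
  hence "sign_projection j (-1) v = v"
    using True sign_projection_carrier[OF assms(1,2)] by simp
  thus ?thesis using that[of "-1"] assms(3) by simp
qed (use that[of 1] in simp)

lemma sign_projection_eigen:
  assumes "j \<in> J" "v \<in> carrier_vec N" "\<sigma> \<in> {-1, 1}"
  shows "A j *\<^sub>v sign_projection j \<sigma> v = complex_of_real \<sigma> \<cdot>\<^sub>v sign_projection j \<sigma> v"
proof -
  have j: "A j \<in> carrier_mat N N" using assms by simp
  have "A j *\<^sub>v sign_projection j \<sigma> v
      = (1/2) \<cdot>\<^sub>v (A j *\<^sub>v v + complex_of_real \<sigma> \<cdot>\<^sub>v ((A j * A j) *\<^sub>v v))"
    unfolding sign_projection_def using j assms(2) by (simp add: mult_mat_vec mult_add_distrib_mat_vec)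
  also have "\<dots> = (1/2) \<cdot>\<^sub>v (A j *\<^sub>v v + complex_of_real \<sigma> \<cdot>\<^sub>v v)"
    using A_square[OF assms(1)] assms(2) by simp
  also have "\<dots> = complex_of_real \<sigma> \<cdot>\<^sub>v sign_projection j \<sigma> v"
    unfolding sign_projection_def using j assms by (intro eq_vecI) (auto simp: algebra_simps)
  finally show ?thesis .
qed

lemma sign_projection_commute:
  assumes "j \<in> J" "v \<in> carrier_vec N" "M \<in> carrier_mat N N" "M * A j = A j * M"
    and "M *\<^sub>v v = \<mu> \<cdot>\<^sub>v v"
  shows "M *\<^sub>v sign_projection j \<sigma> v = \<mu> \<cdot>\<^sub>v sign_projection j \<sigma> v"
proof -
  have j: "A j \<in> carrier_mat N N" using assms by simp
  have "M *\<^sub>v sign_projection j \<sigma> v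
      = (1/2) \<cdot>\<^sub>v (M *\<^sub>v v + complex_of_real \<sigma> \<cdot>\<^sub>v ((M * A j) *\<^sub>v v))"
    unfolding sign_projection_def using j assms(2,3) by (simp add: mult_mat_vec mult_add_distrib_mat_vec)
  also have "\<dots> = (1/2) \<cdot>\<^sub>v (\<mu> \<cdot>\<^sub>v v + complex_of_real \<sigma> \<cdot>\<^sub>v (\<mu> \<cdot>\<^sub>v (A j *\<^sub>v v)))"
    unfolding assms(4) using j assms(2,3,5) by (simp add: mult_mat_vec)
  also have "\<dots> = \<mu> \<cdot>\<^sub>v sign_projection j \<sigma> v"
    unfolding sign_projection_def using j assms by (intro eq_vecI) (auto simp: algebra_simps)
  finally show ?thesis .
qed

definition common_eigenvector :: "complex vec \<Rightarrow> (nat \<Rightarrow> real) \<Rightarrow> nat set \<Rightarrow> bool" where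
  "common_eigenvector v s K \<longleftrightarrow> v \<in> carrier_vec N \<and> v \<noteq> 0\<^sub>v N
     \<and> (\<forall>k\<in>K. A k *\<^sub>v v = complex_of_real (s k) \<cdot>\<^sub>v v)"

lemma common_eigenvector_sign_projection:
  assumes "j \<in> J" "K \<subseteq> J" "common_eigenvector v s K" "\<sigma> \<in> {-1, 1}"
    and "sign_projection j \<sigma> v \<noteq> 0\<^sub>v N"
  shows "common_eigenvector (sign_projection j \<sigma> v) (s(j := \<sigma>)) (insert j K)"
proof -
  have v: "v \<in> carrier_vec N" and Av: "\<And>k. k \<in> K \<Longrightarrow> A k *\<^sub>v v = complex_of_real (s k) \<cdot>\<^sub>v v"
    using assms(3) by (auto simp: common_eigenvector_def)
  have "A k *\<^sub>v sign_projection j \<sigma> v = complex_of_real ((s(j := \<sigma>)) k) \<cdot>\<^sub>v sign_projection j \<sigma> v"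
    if k: "k \<in> insert j K" for k
  proof (cases "k = j")
    case True
    thus ?thesis using sign_projection_eigen[OF assms(1) v assms(4)] by simp
  next
    case False
    hence "k \<in> K" and "k \<in> J" using k assms(2) by auto
    thus ?thesis
      using sign_projection_commute[OF assms(1) v A_carrier[of k] A_commute[of k j] Av] assms(1) False
      by simp
  qed
  thus ?thesis using sign_projection_carrier[OF assms(1) v] assms(5)
    unfolding common_eigenvector_def by blast
qed

lemma common_eigenvector_in_eigenspace:
  assumes "finite K" "K \<subseteq> J" "M \<in> carrier_mat N N" "\<forall>k\<in>K. M * A k = A k * M"
    and "v \<in> carrier_vec N" "v \<noteq> 0\<^sub>v N" "M *\<^sub>v v = \<mu> \<cdot>\<^sub>v v"
  shows "\<exists>u s. s \<in> K \<rightarrow> {-1, 1} \<and> common_eigenvector u s K \<and> M *\<^sub>v u = \<mu> \<cdot>\<^sub>v u"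
  using assms
proof (induction K rule: finite_induct)
  case empty
  thus ?case by (intro exI[of _ v] exI[of _ "\<lambda>_. 1"]) (simp add: common_eigenvector_def)
next
  case (insert j K)
  then obtain u s where s: "s \<in> K \<rightarrow> {-1, 1}" and u: "common_eigenvector u s K"
    and Mu: "M *\<^sub>v u = \<mu> \<cdot>\<^sub>v u" by auto
  have j: "j \<in> J" and K: "K \<subseteq> J" using insert.prems by auto
  obtain \<sigma> where \<sigma>: "\<sigma> \<in> {-1, 1}" and nz: "sign_projection j \<sigma> u \<noteq> 0\<^sub>v N"
    using u j by (auto simp: common_eigenvector_def elim: sign_projection_nonzero)
  have "common_eigenvector (sign_projection j \<sigma> u) (s(j := \<sigma>)) (insert j K)"
    by (rule common_eigenvector_sign_projection[OF j K u \<sigma> nz])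
  moreover have "M *\<^sub>v sign_projection j \<sigma> u = \<mu> \<cdot>\<^sub>v sign_projection j \<sigma> u"
    using u insert.prems Mu by (intro sign_projection_commute[OF j]) (auto simp: common_eigenvector_def)
  moreover have "s(j := \<sigma>) \<in> insert j K \<rightarrow> {-1, 1}" using s \<sigma> unfolding Pi_def by auto
  ultimately show ?case by blast
qed

lemma weighted_sum_mult_common_eigenvector:
  assumes "distinct js" "set js \<subseteq> J" "common_eigenvector v s (set js)"
  shows "weighted_sum w js *\<^sub>v v = complex_of_real (\<Sum>j\<in>set js. w j * s j) \<cdot>\<^sub>v v"
  using assms
proof (induction js)
  case Nil
  thus ?case by (intro eq_vecI) (auto simp: weighted_sum_def common_eigenvector_def)
next
  case (Cons j js)
  have v: "v \<in> carrier_vec N" using Cons.prems by (simp add: common_eigenvector_def)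
  have "weighted_sum w (j # js) *\<^sub>v v = complex_of_real (w j) \<cdot>\<^sub>v (complex_of_real (s j) \<cdot>\<^sub>v v)
      + complex_of_real (\<Sum>j\<in>set js. w j * s j) \<cdot>\<^sub>v v"
    using weighted_sum_Cons_mult_vec[OF Cons.prems(2) v] Cons by (simp add: common_eigenvector_def)
  also have "\<dots> = complex_of_real (\<Sum>j\<in>set (j # js). w j * s j) \<cdot>\<^sub>v v"
    using Cons.prems(1) v by (intro eq_vecI) (auto simp: algebra_simps)
  finally show ?case .
qed

lemma eigenvalue_weighted_sum_in_sign_sums:
  assumes "set js \<subseteq> J" "distinct js" "eigenvalue (weighted_sum w js) \<mu>"
  shows "\<mu> \<in> complex_of_real ` sign_sums w (set js)"
proof -
  have H: "weighted_sum w js \<in> carrier_mat N N" using assms(1) by (rule weighted_sum_carrier)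
  then obtain v where v: "v \<in> carrier_vec N" "v \<noteq> 0\<^sub>v N" "weighted_sum w js *\<^sub>v v = \<mu> \<cdot>\<^sub>v v"
    using assms(3) by (auto simp: eigenvalue_def eigenvector_def)
  obtain u s where s: "s \<in> set js \<rightarrow> {-1, 1}" and u: "common_eigenvector u s (set js)"
    and Hu: "weighted_sum w js *\<^sub>v u = \<mu> \<cdot>\<^sub>v u"
    using common_eigenvector_in_eigenspace[OF _ assms(1) H _ v] weighted_sum_commute[OF assms(1)] assms(1)
    by blast
  have "\<mu> \<cdot>\<^sub>v u = complex_of_real (\<Sum>j\<in>set js. w j * s j) \<cdot>\<^sub>v u"
    using Hu weighted_sum_mult_common_eigenvector[OF assms(2,1) u] by simp
  hence "\<mu> = complex_of_real (\<Sum>j\<in>set js. w j * s j)"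
    using u by (auto simp: common_eigenvector_def intro: smult_vec_right_cancel)
  thus ?thesis using s unfolding sign_sums_def by blast
qed

end

text \<open>The \<open>F\<^sub>j\<close> flip the sign of \<open>A\<^sub>j\<close> alone, so that every sign pattern is realised.\<close>
locale commuting_involutions_with_flips = commuting_involutions +
  fixes F :: "nat \<Rightarrow> complex mat"
  assumes F_carrier [simp]: "j \<in> J \<Longrightarrow> F j \<in> carrier_mat N N"
    and F_square: "j \<in> J \<Longrightarrow> F j * F j = 1\<^sub>m N"
    and A_F_anticommute: "j \<in> J \<Longrightarrow> A j * F j = (-1) \<cdot>\<^sub>m (F j * A j)"
    and A_F_commute: "j \<in> J \<Longrightarrow> k \<in> J \<Longrightarrow> k \<noteq> j \<Longrightarrow> A k * F j = F j * A k"
begin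

lemma dim_F [simp]: "j \<in> J \<Longrightarrow> dim_row (F j) = N" "j \<in> J \<Longrightarrow> dim_col (F j) = N"
  using F_carrier by (auto simp del: F_carrier)

lemma common_eigenvector_flip:
  assumes "j \<in> K" "K \<subseteq> J" "common_eigenvector v s K"
  shows "common_eigenvector (F j *\<^sub>v v) (s(j := - s j)) K"
proof -
  have j: "j \<in> J" using assms by auto
  have v: "v \<in> carrier_vec N" "v \<noteq> 0\<^sub>v N" using assms(3) by (auto simp: common_eigenvector_def)
  have Fj: "F j \<in> carrier_mat N N" using j by simp
  have "F j *\<^sub>v v \<noteq> 0\<^sub>v N"
  proof
    assume "F j *\<^sub>v v = 0\<^sub>v N"
    hence "(F j * F j) *\<^sub>v v = F j *\<^sub>v 0\<^sub>v N" using Fj v by simp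
    also have "\<dots> = 0\<^sub>v N" using j by (intro eq_vecI) auto
    finally have "(F j * F j) *\<^sub>v v = 0\<^sub>v N" .
    thus False using F_square[OF j] v by simp
  qed
  moreover have "A k *\<^sub>v (F j *\<^sub>v v) = complex_of_real ((s(j := - s j)) k) \<cdot>\<^sub>v (F j *\<^sub>v v)"
    if k: "k \<in> K" for k
  proof -
    have Ak: "A k \<in> carrier_mat N N" and Akv: "A k *\<^sub>v v = complex_of_real (s k) \<cdot>\<^sub>v v"
      using k assms by (auto simp: common_eigenvector_def)
    have "A k *\<^sub>v (F j *\<^sub>v v) = (A k * F j) *\<^sub>v v" using Ak Fj v by simp
    also have "\<dots> = (if k = j then -1 else 1) \<cdot>\<^sub>v (F j *\<^sub>v (A k *\<^sub>v v))"
    proof (cases "k = j")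
      case True
      thus ?thesis using A_F_anticommute[OF j] smult_mat_mult_vec[of "F j * A j" N N v]
        assoc_mult_mat_vec[of "F j" N N "A j" N v] Fj v j by simp
    next
      case False
      have kJ: "k \<in> J" using k assms(2) by auto
      show ?thesis using False A_F_commute[OF j kJ False]
        assoc_mult_mat_vec[of "F j" N N "A k" N v] Ak Fj v by simp
    qed
    also have "\<dots> = complex_of_real ((s(j := - s j)) k) \<cdot>\<^sub>v (F j *\<^sub>v v)"
      unfolding Akv using Fj v by (intro eq_vecI) (auto simp: mult_mat_vec)
    finally show ?thesis .
  qed
  ultimately show ?thesis using Fj v by (simp add: common_eigenvector_def)
qed

lemma common_eigenvector_exists:
  assumes "0 < N" "finite K" "K \<subseteq> J" "s \<in> K \<rightarrow> {-1, 1}"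
  shows "\<exists>v. common_eigenvector v s K"
  using assms(2-4)
proof (induction K rule: finite_induct)
  case empty
  have "unit_vec N 0 \<noteq> (0\<^sub>v N :: complex vec)"
    using assms(1) by (metis index_unit_vec(1) index_zero_vec(1) zero_neq_one)
  thus ?case by (intro exI[of _ "unit_vec N 0"]) (simp add: common_eigenvector_def)
next
  case (insert j K)
  then obtain v where v: "common_eigenvector v s K" by auto
  have j: "j \<in> J" and K: "K \<subseteq> J" using insert.prems by auto
  obtain \<sigma> where \<sigma>: "\<sigma> \<in> {-1, 1}" and nz: "sign_projection j \<sigma> v \<noteq> 0\<^sub>v N"
    using v j by (auto simp: common_eigenvector_def elim: sign_projection_nonzero)
  define u where "u = sign_projection j \<sigma> v"
  have u: "common_eigenvector u (s(j := \<sigma>)) (insert j K)"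
    unfolding u_def by (rule common_eigenvector_sign_projection[OF j K v \<sigma> nz])
  show ?case
  proof (cases "\<sigma> = s j")
    case True
    thus ?thesis using u by auto
  next
    case False
    have "common_eigenvector (F j *\<^sub>v u) (s(j := \<sigma>, j := - \<sigma>)) (insert j K)"
      using common_eigenvector_flip[OF insertI1 insert.prems(1) u] by simp
    moreover have "s(j := \<sigma>, j := - \<sigma>) = s" using False \<sigma> insert.prems(2) by auto
    ultimately show ?thesis by auto
  qed
qed

lemma real_spec_weighted_sum:
  assumes "0 < N" "set js \<subseteq> J" "distinct js"
  shows "real_spec (weighted_sum w js) = sign_sums w (set js)"
proof (rule subset_antisym; rule subsetI)
  fix x assume "x \<in> real_spec (weighted_sum w js)"
  thus "x \<in> sign_sums w (set js)"
    using eigenvalue_weighted_sum_in_sign_sums[OF assms(2,3)] by (force simp: real_spec_def)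
next
  fix x assume "x \<in> sign_sums w (set js)"
  then obtain s where s: "s \<in> set js \<rightarrow> {-1, 1}" and x: "x = (\<Sum>j\<in>set js. w j * s j)"
    unfolding sign_sums_def by blast
  obtain v where v: "common_eigenvector v s (set js)"
    using common_eigenvector_exists[OF assms(1) _ assms(2) s] by blast
  have "eigenvector (weighted_sum w js) v (complex_of_real x)"
    using v weighted_sum_mult_common_eigenvector[OF assms(3,2) v]
      carrier_matD[OF weighted_sum_carrier[OF assms(2), of w]]
    unfolding x eigenvector_def common_eigenvector_def by simp
  thus "x \<in> real_spec (weighted_sum w js)" by (auto simp: real_spec_def eigenvalue_def)
qed

end

section \<open>Monomial matrices\<close>

definition monomial_mat :: "nat \<Rightarrow> (nat \<Rightarrow> nat) \<Rightarrow> (nat \<Rightarrow> complex) \<Rightarrow> complex mat" where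
  "monomial_mat N f g = mat N N (\<lambda>(r, c). if r = f c then g c else 0)"

lemma monomial_mat_carrier [simp]: "monomial_mat N f g \<in> carrier_mat N N"
  by (simp add: monomial_mat_def)

lemma index_monomial_mat:
  "r < N \<Longrightarrow> c < N \<Longrightarrow> monomial_mat N f g $$ (r, c) = (if r = f c then g c else 0)"
  by (simp add: monomial_mat_def)

lemma monomial_mat_mult:
  assumes "\<And>c. c < N \<Longrightarrow> f2 c < N"
  shows "monomial_mat N f1 g1 * monomial_mat N f2 g2
       = monomial_mat N (\<lambda>c. f1 (f2 c)) (\<lambda>c. g1 (f2 c) * g2 c)"
proof (rule eq_matI)
  fix r c assume "r < dim_row (monomial_mat N (\<lambda>c. f1 (f2 c)) (\<lambda>c. g1 (f2 c) * g2 c))"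
    "c < dim_col (monomial_mat N (\<lambda>c. f1 (f2 c)) (\<lambda>c. g1 (f2 c) * g2 c))"
  hence r: "r < N" and c: "c < N" by (auto simp: monomial_mat_def)
  have "(monomial_mat N f1 g1 * monomial_mat N f2 g2) $$ (r, c) =
     (\<Sum>m\<in>{0..<N}. (if r = f1 m then g1 m else 0) * (if m = f2 c then g2 c else 0))"
    using r c by (simp add: monomial_mat_def scalar_prod_def)
  also have "\<dots> = (\<Sum>m\<in>{0..<N}. if m = f2 c then (if r = f1 (f2 c) then g1 (f2 c) * g2 c else 0) else 0)"
    by (rule sum.cong) auto
  also have "\<dots> = (if r = f1 (f2 c) then g1 (f2 c) * g2 c else 0)"
    using assms[OF c] by simp
  finally show "(monomial_mat N f1 g1 * monomial_mat N f2 g2) $$ (r, c)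
      = monomial_mat N (\<lambda>c. f1 (f2 c)) (\<lambda>c. g1 (f2 c) * g2 c) $$ (r, c)"
    using r c by (simp add: monomial_mat_def)
qed (auto simp: monomial_mat_def)

lemma monomial_mat_add: "monomial_mat N f g1 + monomial_mat N f g2 = monomial_mat N f (\<lambda>c. g1 c + g2 c)"
  by (rule eq_matI) (auto simp: monomial_mat_def)

lemma smult_monomial_mat: "a \<cdot>\<^sub>m monomial_mat N f g = monomial_mat N f (\<lambda>c. a * g c)"
  by (rule eq_matI) (auto simp: monomial_mat_def)

lemma monomial_mat_cong:
  "(\<And>c. c < N \<Longrightarrow> f c = f' c) \<Longrightarrow> (\<And>c. c < N \<Longrightarrow> g c = g' c) \<Longrightarrow> monomial_mat N f g = monomial_mat N f' g'"
  by (rule eq_matI) (auto simp: monomial_mat_def)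

lemma monomial_mat_id: "(\<And>c. c < N \<Longrightarrow> g c = 1) \<Longrightarrow> monomial_mat N (\<lambda>c. c) g = 1\<^sub>m N"
  by (rule eq_matI) (auto simp: monomial_mat_def)

section \<open>Majorana operators\<close>

lemma flip_bit_flip_bit [simp]: "flip_bit i (flip_bit i (c::nat)) = c"
  by (rule bit_eqI) (auto simp: bit_flip_bit_iff)

lemma flip_bit_commute: "flip_bit i (flip_bit j (c::nat)) = flip_bit j (flip_bit i c)"
  by (rule bit_eqI) (auto simp: bit_flip_bit_iff)

lemma flip_bit_less_power:
  assumes "(c::nat) < 2^L" "i < L"
  shows "flip_bit i c < 2^L"
proof -
  have "take_bit L (flip_bit i c) = flip_bit i (take_bit L c)"
    using assms by (simp add: take_bit_flip_bit_eq)
  also have "\<dots> = flip_bit i c" using assms take_bit_nat_eq_self_iff[of L c] by simp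
  finally show ?thesis by (simp add: take_bit_nat_eq_self_iff)
qed

lemma flip_bit_eq_diff:
  assumes "bit (c::nat) i"
  shows "flip_bit i c = c - 2^i"
proof -
  have "\<not> bit (flip_bit i c) i" using assms by (simp add: bit_flip_bit_iff)
  hence "flip_bit i (flip_bit i c) = flip_bit i c + 2^i" by (simp add: flip_bit_eq_if set_bit_eq)
  thus ?thesis by simp
qed

definition jw_sign :: "nat \<Rightarrow> nat \<Rightarrow> complex" where
  "jw_sign i c = (-1) ^ card {k. k < i \<and> bit c k}"

lemma jw_sign_flip_bit_ge: "i \<le> m \<Longrightarrow> jw_sign i (flip_bit m c) = jw_sign i c"
proof -
  assume "i \<le> m"
  hence "{k. k < i \<and> bit (flip_bit m c) k} = {k. k < i \<and> bit c k}"
    by (auto simp: bit_flip_bit_iff)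
  thus ?thesis by (simp add: jw_sign_def)
qed

lemma jw_sign_flip_bit_less:
  assumes "m < i"
  shows "jw_sign i (flip_bit m c) = - jw_sign i c"
proof (cases "bit c m")
  case True
  define S where "S = {k. k < i \<and> bit (flip_bit m c) k}"
  have "{k. k < i \<and> bit c k} = insert m S" and "m \<notin> S" and "finite S"
    using True assms by (auto simp: S_def bit_flip_bit_iff)
  thus ?thesis by (simp add: jw_sign_def S_def[symmetric])
next
  case False
  have "{k. k < i \<and> bit (flip_bit m c) k} = insert m {k. k < i \<and> bit c k}"
    using False assms by (auto simp: bit_flip_bit_iff)
  thus ?thesis using False by (simp add: jw_sign_def)
qed

lemma jw_sign_square: "jw_sign i c * jw_sign i c = 1"
  by (simp add: jw_sign_def power_mult_distrib[symmetric])

lemma index_mat_adjoint: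
  "i < dim_col A \<Longrightarrow> j < dim_row A \<Longrightarrow> mat_adjoint A $$ (i, j) = conjugate (A $$ (j, i))"
  by (simp add: mat_adjoint_def mat_of_rows_def)

lemma annih_monomial:
  "annih L j = monomial_mat (2^L) (flip_bit (j - 1))
     (\<lambda>c. if bit c (j - 1) then jw_sign (j - 1) c else 0)"
proof -
  have "(bit c (j - 1) \<and> r = c - 2^(j - 1)) \<longleftrightarrow> (bit c (j - 1) \<and> r = flip_bit (j - 1) c)" for r c :: nat
    using flip_bit_eq_diff by auto
  thus ?thesis by (intro eq_matI) (auto simp: annih_def monomial_mat_def jw_sign_def)
qed

lemma creat_monomial:
  "creat L j = monomial_mat (2^L) (flip_bit (j - 1))
     (\<lambda>c. if bit c (j - 1) then 0 else jw_sign (j - 1) c)"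
proof (rule eq_matI)
  fix r c assume "r < dim_row (monomial_mat (2^L) (flip_bit (j - 1))
     (\<lambda>c. if bit c (j - 1) then 0 else jw_sign (j - 1) c))" "c < dim_col (monomial_mat (2^L) (flip_bit (j - 1))
     (\<lambda>c. if bit c (j - 1) then 0 else jw_sign (j - 1) c))"
  hence rc: "r < 2^L" "c < 2^L" by (simp_all add: monomial_mat_def)
  have "creat L j $$ (r, c) = cnj (annih L j $$ (c, r))"
    using rc by (simp add: creat_def index_mat_adjoint annih_def)
  also have "\<dots> = cnj (if bit r (j - 1) \<and> c = flip_bit (j - 1) r then jw_sign (j - 1) r else 0)"
    using rc by (simp add: annih_monomial index_monomial_mat)
  also have "\<dots> = (if \<not> bit c (j - 1) \<and> r = flip_bit (j - 1) c then jw_sign (j - 1) c else 0)"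
    using jw_sign_flip_bit_ge[of "j - 1" "j - 1" c] by (auto simp: bit_flip_bit_iff jw_sign_def)
  finally show "creat L j $$ (r, c) = monomial_mat (2^L) (flip_bit (j - 1))
     (\<lambda>c. if bit c (j - 1) then 0 else jw_sign (j - 1) c) $$ (r, c)"
    using rc by (simp add: index_monomial_mat)
qed (simp_all add: creat_def mat_adjoint_def annih_def monomial_mat_def)

text \<open>The 0-based bit position of the site carrying \<open>b\<^sub>p\<close>; sites are 1-based in \<open>annih\<close>.\<close>
definition site :: "nat \<Rightarrow> nat" where
  "site p = (p + 1) div 2 - 1"

definition majorana_phase :: "real \<Rightarrow> nat \<Rightarrow> bool \<Rightarrow> complex" where
  "majorana_phase \<theta> p occupied =
     (if odd p then (if occupied then cis (\<theta>/2) else cis (-\<theta>/2))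
      else (if occupied then - \<i> * cis (\<theta>/2) else \<i> * cis (-\<theta>/2)))"

definition majorana_coeff :: "real \<Rightarrow> nat \<Rightarrow> nat \<Rightarrow> complex" where
  "majorana_coeff \<theta> p c = jw_sign (site p) c * majorana_phase \<theta> p (bit c (site p))"

lemma majorana_monomial:
  "majorana \<theta> L p = monomial_mat (2^L) (flip_bit (site p)) (majorana_coeff \<theta> p)"
  unfolding majorana_def Let_def annih_monomial creat_monomial site_def[symmetric]
    smult_monomial_mat monomial_mat_add
  by (auto intro!: monomial_mat_cong simp: majorana_coeff_def majorana_phase_def)

lemma majorana_carrier [simp]: "majorana \<theta> L p \<in> carrier_mat (2^L) (2^L)"
  by (simp add: majorana_monomial)

lemma site_less: "1 \<le> p \<Longrightarrow> p \<le> 2*L \<Longrightarrow> site p < L"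
  unfolding site_def by linarith

lemma majorana_coeff_flip_other:
  assumes "site p \<noteq> b"
  shows "majorana_coeff \<theta> p (flip_bit b c) = (if b < site p then -1 else 1) * majorana_coeff \<theta> p c"
proof -
  have "bit (flip_bit b c) (site p) = bit c (site p)" using assms by (auto simp: bit_flip_bit_iff)
  thus ?thesis using assms jw_sign_flip_bit_ge[of "site p" b c] jw_sign_flip_bit_less[of b "site p" c]
    unfolding majorana_coeff_def by auto
qed

lemma majorana_coeff_flip_same:
  "majorana_coeff \<theta> p (flip_bit (site p) c) = jw_sign (site p) c * majorana_phase \<theta> p (\<not> bit c (site p))"
  unfolding majorana_coeff_def using jw_sign_flip_bit_ge[of "site p" "site p" c]
  by (simp add: bit_flip_bit_iff)

lemma majorana_phase_flip_mult: "majorana_phase \<theta> p (\<not> occupied) * majorana_phase \<theta> p occupied = 1"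
proof -
  have "majorana_phase \<theta> p (\<not> occupied) * majorana_phase \<theta> p occupied = cis (\<theta>/2) * cis (-\<theta>/2)"
    unfolding majorana_phase_def by (cases occupied; cases "odd p") (simp_all add: algebra_simps)
  thus ?thesis by (simp add: cis_mult)
qed

lemma majorana_phase_flip_anticommute:
  assumes "odd p \<noteq> odd q"
  shows "majorana_phase \<theta> p (\<not> occupied) * majorana_phase \<theta> q occupied
       = - (majorana_phase \<theta> q (\<not> occupied) * majorana_phase \<theta> p occupied)"
proof -
  have "cis (\<theta>/2) * cis (-\<theta>/2) = 1" "cis (-\<theta>/2) * cis (\<theta>/2) = 1" by (simp_all add: cis_mult)
  thus ?thesis using assms unfolding majorana_phase_def
    by (cases occupied; cases "odd p") (simp_all add: algebra_simps)
qed

lemma majorana_mult: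
  assumes "1 \<le> q" "q \<le> 2*L"
  shows "majorana \<theta> L p * majorana \<theta> L q = monomial_mat (2^L)
           (\<lambda>c. flip_bit (site p) (flip_bit (site q) c))
           (\<lambda>c. majorana_coeff \<theta> p (flip_bit (site q) c) * majorana_coeff \<theta> q c)"
  unfolding majorana_monomial using flip_bit_less_power site_less[OF assms]
  by (intro monomial_mat_mult) auto

lemma majorana_square:
  assumes "1 \<le> p" "p \<le> 2*L"
  shows "majorana \<theta> L p * majorana \<theta> L p = 1\<^sub>m (2^L)"
proof -
  have "majorana_coeff \<theta> p (flip_bit (site p) c) * majorana_coeff \<theta> p c
      = (jw_sign (site p) c * jw_sign (site p) c)
        * (majorana_phase \<theta> p (\<not> bit c (site p)) * majorana_phase \<theta> p (bit c (site p)))" for c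
    unfolding majorana_coeff_flip_same by (simp add: majorana_coeff_def algebra_simps)
  thus ?thesis
    unfolding majorana_mult[OF assms]
    by (simp add: monomial_mat_id jw_sign_square majorana_phase_flip_mult)
qed

lemma majorana_anticommute:
  assumes "1 \<le> p" "p \<le> 2*L" "1 \<le> q" "q \<le> 2*L" "p \<noteq> q"
  shows "majorana \<theta> L p * majorana \<theta> L q = (-1) \<cdot>\<^sub>m (majorana \<theta> L q * majorana \<theta> L p)"
proof -
  let ?a = "site p" and ?b = "site q"
  have coeff: "majorana_coeff \<theta> p (flip_bit ?b c) * majorana_coeff \<theta> q c
             = - (majorana_coeff \<theta> q (flip_bit ?a c) * majorana_coeff \<theta> p c)" for c
  proof (cases "?a = ?b")
    case True
    \<comment> \<open>the two Majoranas of one site differ in the parity of their index\<close>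
    hence parity: "odd p \<noteq> odd q" using assms unfolding site_def by presburger
    have "majorana_coeff \<theta> p (flip_bit ?b c) * majorana_coeff \<theta> q c =
        (jw_sign ?a c * jw_sign ?a c) * (majorana_phase \<theta> p (\<not> bit c ?a) * majorana_phase \<theta> q (bit c ?a))"
      unfolding True[symmetric] majorana_coeff_flip_same unfolding majorana_coeff_def True
      by (simp add: algebra_simps)
    moreover have "majorana_coeff \<theta> q (flip_bit ?a c) * majorana_coeff \<theta> p c =
        (jw_sign ?a c * jw_sign ?a c) * (majorana_phase \<theta> q (\<not> bit c ?a) * majorana_phase \<theta> p (bit c ?a))"
      unfolding True majorana_coeff_flip_same unfolding majorana_coeff_def True
      by (simp add: algebra_simps)
    ultimately show ?thesis using majorana_phase_flip_anticommute[OF parity] by simp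
  next
    case False
    \<comment> \<open>exactly one of the two Jordan-Wigner strings passes the other site\<close>
    thus ?thesis using majorana_coeff_flip_other[OF False] majorana_coeff_flip_other[OF not_sym[OF False]]
      by auto
  qed
  show ?thesis unfolding majorana_mult[OF assms(1,2)] majorana_mult[OF assms(3,4)] smult_monomial_mat
    by (rule monomial_mat_cong) (simp_all add: flip_bit_commute coeff)
qed

section \<open>Bilinears of anticommuting involutions\<close>

lemma smult_smult_mat: "a \<cdot>\<^sub>m (b \<cdot>\<^sub>m M) = (a * b :: complex) \<cdot>\<^sub>m M"
  by (rule eq_matI) auto

lemma one_smult_mat: "(1::complex) \<cdot>\<^sub>m M = M"
  by (rule eq_matI) auto

lemma smult_mult_smult_mat:
  assumes "X \<in> carrier_mat n n" "Y \<in> carrier_mat n n"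
  shows "(a \<cdot>\<^sub>m X) * (b \<cdot>\<^sub>m Y) = (a * b :: complex) \<cdot>\<^sub>m (X * Y)"
  using mult_smult_assoc_mat[OF assms(1) smult_carrier_mat[OF assms(2)], of a b]
    mult_smult_distrib[OF assms, of b] by (simp add: smult_smult_mat)

definition majorana_bilinear :: "(nat \<Rightarrow> complex mat) \<Rightarrow> nat \<Rightarrow> nat \<Rightarrow> complex mat" where
  "majorana_bilinear B a b = \<i> \<cdot>\<^sub>m (B a * B b)"

locale anticommuting_involutions =
  fixes N :: nat and B :: "nat \<Rightarrow> complex mat" and I :: "nat set"
  assumes B_carrier [simp]: "p \<in> I \<Longrightarrow> B p \<in> carrier_mat N N"
    and B_square: "p \<in> I \<Longrightarrow> B p * B p = 1\<^sub>m N"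
    and B_anticommute: "p \<in> I \<Longrightarrow> q \<in> I \<Longrightarrow> p \<noteq> q \<Longrightarrow> B p * B q = (-1) \<cdot>\<^sub>m (B q * B p)"
begin

lemma B_mult_carrier [simp]: "p \<in> I \<Longrightarrow> q \<in> I \<Longrightarrow> B p * B q \<in> carrier_mat N N"
  using mult_carrier_mat[of "B p" N N "B q" N] by simp

lemma pair_commute_single:
  assumes "a \<in> I" "b \<in> I" "c \<in> I" "c \<noteq> a" "c \<noteq> b"
  shows "(B a * B b) * B c = B c * (B a * B b)"
proof -
  have ca: "B a \<in> carrier_mat N N" and cb: "B b \<in> carrier_mat N N" and cc: "B c \<in> carrier_mat N N"
    using assms by simp_all
  have "(B a * B b) * B c = B a * (B b * B c)" using ca cb cc by simp
  also have "\<dots> = B a * ((-1) \<cdot>\<^sub>m (B c * B b))" using B_anticommute[OF assms(2,3)] assms(5) by simp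
  also have "\<dots> = (-1) \<cdot>\<^sub>m ((B a * B c) * B b)"
    using mult_smult_distrib[OF ca mult_carrier_mat[OF cc cb], of "-1"] assoc_mult_mat[OF ca cc cb] by simp
  also have "\<dots> = (-1) \<cdot>\<^sub>m (((-1) \<cdot>\<^sub>m (B c * B a)) * B b)"
    using B_anticommute[OF assms(1,3)] assms(4) by simp
  also have "\<dots> = B c * (B a * B b)"
    using mult_smult_assoc_mat[OF mult_carrier_mat[OF cc ca] cb, of "-1"] assoc_mult_mat[OF cc ca cb]
    by (simp add: smult_smult_mat one_smult_mat)
  finally show ?thesis .
qed

lemma pair_square:
  assumes "a \<in> I" "b \<in> I" "a \<noteq> b"
  shows "(B a * B b) * (B a * B b) = (-1) \<cdot>\<^sub>m 1\<^sub>m N"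
proof -
  have ca: "B a \<in> carrier_mat N N" and cb: "B b \<in> carrier_mat N N" using assms by simp_all
  have cab: "B a * B b \<in> carrier_mat N N" and cba: "B b * B a \<in> carrier_mat N N" using ca cb by simp_all
  have "(B a * B b) * (B a * B b) = B a * ((B b * B a) * B b)"
    using assoc_mult_mat[OF cab ca cb] assoc_mult_mat[OF ca cb ca] assoc_mult_mat[OF ca cba cb] by metis
  also have "\<dots> = B a * (((-1) \<cdot>\<^sub>m (B a * B b)) * B b)" using B_anticommute[OF assms(2,1)] assms(3) by simp
  also have "\<dots> = (-1) \<cdot>\<^sub>m ((B a * B a) * (B b * B b))"
    using mult_smult_assoc_mat[OF cab cb, of "-1"] mult_smult_distrib[OF ca mult_carrier_mat[OF cab cb], of "-1"]
      assoc_mult_mat[OF ca cb cb] assoc_mult_mat[OF ca ca mult_carrier_mat[OF cb cb]] by simp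
  also have "\<dots> = (-1) \<cdot>\<^sub>m 1\<^sub>m N" using B_square[OF assms(1)] B_square[OF assms(2)] by simp
  finally show ?thesis .
qed

lemma majorana_bilinear_square:
  assumes "a \<in> I" "b \<in> I" "a \<noteq> b"
  shows "majorana_bilinear B a b * majorana_bilinear B a b = 1\<^sub>m N"
  using pair_square[OF assms] assms
  by (simp add: majorana_bilinear_def smult_mult_smult_mat[of _ N] smult_smult_mat one_smult_mat)

lemma majorana_bilinear_commute:
  assumes "a \<in> I" "b \<in> I" "c \<in> I" "d \<in> I" "c \<notin> {a, b}" "d \<notin> {a, b}"
  shows "majorana_bilinear B a b * majorana_bilinear B c d = majorana_bilinear B c d * majorana_bilinear B a b"
proof -
  have cab: "B a * B b \<in> carrier_mat N N" and cc: "B c \<in> carrier_mat N N" and cd: "B d \<in> carrier_mat N N"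
    using assms by simp_all
  have "(B a * B b) * (B c * B d) = ((B a * B b) * B c) * B d" using cab cc cd by simp
  also have "\<dots> = B c * ((B a * B b) * B d)"
    using pair_commute_single[OF assms(1-3)] assms(5) cab cc cd by simp
  also have "\<dots> = (B c * B d) * (B a * B b)"
    using pair_commute_single[OF assms(1,2,4)] assms(6) cab cc cd by simp
  finally show ?thesis
    using assms by (simp add: majorana_bilinear_def smult_mult_smult_mat[of _ N] mult.commute)
qed

lemma majorana_bilinear_anticommute_left:
  assumes "a \<in> I" "b \<in> I" "a \<noteq> b"
  shows "majorana_bilinear B a b * B a = (-1) \<cdot>\<^sub>m (B a * majorana_bilinear B a b)"
proof -
  have ca: "B a \<in> carrier_mat N N" and cb: "B b \<in> carrier_mat N N" using assms by simp_all
  have "(B a * B b) * B a = B a * (B b * B a)" using ca cb by simp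
  also have "\<dots> = (-1) \<cdot>\<^sub>m (B a * (B a * B b))"
    using B_anticommute[OF assms(2,1)] assms(3) mult_smult_distrib[OF ca mult_carrier_mat[OF ca cb]] by simp
  finally show ?thesis
    using ca cb mult_smult_assoc_mat[OF mult_carrier_mat[OF ca cb] ca] mult_smult_distrib[OF ca mult_carrier_mat[OF ca cb]]
    by (simp add: majorana_bilinear_def smult_smult_mat mult.commute)
qed

lemma majorana_bilinear_commute_single:
  assumes "a \<in> I" "b \<in> I" "c \<in> I" "c \<notin> {a, b}"
  shows "majorana_bilinear B a b * B c = B c * majorana_bilinear B a b"
  using pair_commute_single[OF assms(1-3)] assms
    mult_smult_assoc_mat[OF mult_carrier_mat[OF B_carrier B_carrier] B_carrier, of a b c]
    mult_smult_distrib[OF B_carrier mult_carrier_mat[OF B_carrier B_carrier], of c a b]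
  by (simp add: majorana_bilinear_def)

lemma majorana_bilinears_with_flips:
  assumes pairs: "\<forall>j\<in>J. p j \<in> I \<and> q j \<in> I \<and> p j \<noteq> q j"
    and disjoint: "\<forall>j\<in>J. \<forall>k\<in>J. j \<noteq> k \<longrightarrow> {p j, q j} \<inter> {p k, q k} = {}"
  shows "commuting_involutions_with_flips N (\<lambda>j. majorana_bilinear B (p j) (q j)) J (\<lambda>j. B (p j))"
proof unfold_locales
  fix j assume j: "j \<in> J"
  show "majorana_bilinear B (p j) (q j) \<in> carrier_mat N N"
    using j pairs by (simp add: majorana_bilinear_def)
  show "majorana_bilinear B (p j) (q j) * majorana_bilinear B (p j) (q j) = 1\<^sub>m N"
    using j pairs by (simp add: majorana_bilinear_square)
  show "B (p j) \<in> carrier_mat N N" "B (p j) * B (p j) = 1\<^sub>m N"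
    using j pairs by (simp_all add: B_square)
  show "majorana_bilinear B (p j) (q j) * B (p j) = (-1) \<cdot>\<^sub>m (B (p j) * majorana_bilinear B (p j) (q j))"
    using j pairs by (simp add: majorana_bilinear_anticommute_left)
  fix k assume k: "k \<in> J"
  show "majorana_bilinear B (p j) (q j) * majorana_bilinear B (p k) (q k)
      = majorana_bilinear B (p k) (q k) * majorana_bilinear B (p j) (q j)"
  proof (cases "j = k")
    case False
    thus ?thesis using j k pairs disjoint by (intro majorana_bilinear_commute) auto
  qed simp
  assume "k \<noteq> j"
  thus "majorana_bilinear B (p k) (q k) * B (p j) = B (p j) * majorana_bilinear B (p k) (q k)"
    using j k pairs disjoint by (intro majorana_bilinear_commute_single) auto
qed

end

section \<open>The closed Kitaev chain\<close>

lemma majorana_anticommuting_involutions: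
  "anticommuting_involutions (2^L) (majorana \<theta> L) {1..2*L}"
  by unfold_locales (auto intro: majorana_square majorana_anticommute)

definition bond_partner :: "nat \<Rightarrow> nat \<Rightarrow> nat" where
  "bond_partner L j = (if j < L then 2*j + 1 else 1)"

definition kitaev_bond :: "real \<Rightarrow> nat \<Rightarrow> nat \<Rightarrow> complex mat" where
  "kitaev_bond \<theta> L j = majorana_bilinear (majorana \<theta> L) (2*j) (bond_partner L j)"

lemma kitaev_bonds_with_flips:
  assumes "2 \<le> L"
  shows "commuting_involutions_with_flips (2^L) (kitaev_bond \<theta> L) {1..L} (\<lambda>j. majorana \<theta> L (2*j))"
  unfolding kitaev_bond_def
proof (rule anticommuting_involutions.majorana_bilinears_with_flips[OF majorana_anticommuting_involutions])
  have "odd (bond_partner L j)" for j by (simp add: bond_partner_def)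
  thus "\<forall>j\<in>{1..L}. \<forall>k\<in>{1..L}. j \<noteq> k \<longrightarrow> {2*j, bond_partner L j} \<inter> {2*k, bond_partner L k} = {}"
    by (auto simp: bond_partner_def)
qed (use assms in \<open>auto simp: bond_partner_def\<close>)

lemma kitaev_H_eq_weighted_sum:
  assumes "2 \<le> L"
  shows "kitaev_H \<theta> L w = commuting_involutions.weighted_sum (2^L) (kitaev_bond \<theta> L) w [1..<Suc L]"
proof -
  interpret commuting_involutions_with_flips "2^L" "kitaev_bond \<theta> L" "{1..L}" "\<lambda>j. majorana \<theta> L (2*j)"
    using kitaev_bonds_with_flips[OF assms] .
  let ?term = "\<lambda>j. complex_of_real (w j) \<cdot>\<^sub>m kitaev_bond \<theta> L j"
  have "[1..<Suc L] = [1..<L] @ [L]" using assms by simp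
  hence "weighted_sum w [1..<Suc L] = mat_sum (2^L) ?term [1..<L] + ?term L"
    unfolding weighted_sum_def by (simp only:) (rule mat_sum_snoc, use assms in auto)
  also have "mat_sum (2^L) ?term [1..<L] = mat_sum (2^L) (\<lambda>j. (complex_of_real (w j) * \<i>) \<cdot>\<^sub>m
                         (majorana \<theta> L (2*j) * majorana \<theta> L (2*j + 1))) [1..<L]"
    by (rule mat_sum_cong) (simp add: kitaev_bond_def majorana_bilinear_def bond_partner_def smult_smult_mat)
  also have "?term L = (complex_of_real (w L) * \<i>) \<cdot>\<^sub>m (majorana \<theta> L (2*L) * majorana \<theta> L 1)"
    by (simp add: kitaev_bond_def majorana_bilinear_def bond_partner_def smult_smult_mat)
  finally show ?thesis unfolding kitaev_H_def by simp
qed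

lemma real_spec_kitaev_H:
  assumes "2 \<le> L"
  shows "real_spec (kitaev_H \<theta> L w) = sign_sums w {1..L}"
proof -
  interpret commuting_involutions_with_flips "2^L" "kitaev_bond \<theta> L" "{1..L}" "\<lambda>j. majorana \<theta> L (2*j)"
    using kitaev_bonds_with_flips[OF assms] .
  have "real_spec (weighted_sum w [1..<Suc L]) = sign_sums w (set [1..<Suc L])"
    by (rule real_spec_weighted_sum) auto
  also have "set [1..<Suc L] = {1..L}" by auto
  finally show ?thesis unfolding kitaev_H_eq_weighted_sum[OF assms] .
qed

theorem proposition3p11:
  fixes \<gamma> \<theta> :: real
  assumes "\<gamma> > 0"
  shows "\<exists>c>0. \<forall>L::nat. \<forall>w::nat \<Rightarrow> real.
           L \<ge> 2 \<longrightarrow> (\<forall>j\<in>{1..L}. \<bar>w j\<bar> \<ge> 2 * \<gamma>) \<longrightarrow>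
           real_spec (kitaev_H \<theta> L w) - {ground_energy (kitaev_H \<theta> L w)} \<noteq> {} \<and>
           spectral_gap (kitaev_H \<theta> L w) \<ge> c"
proof (intro exI[of _ "4 * \<gamma>"] conjI allI impI)
  show "4 * \<gamma> > 0" using assms by simp
  fix L :: nat and w :: "nat \<Rightarrow> real"
  assume "L \<ge> 2" and "\<forall>j\<in>{1..L}. \<bar>w j\<bar> \<ge> 2 * \<gamma>"
  moreover have "real_spec (kitaev_H \<theta> L w) = sign_sums w {1..L}"
    using \<open>L \<ge> 2\<close> by (rule real_spec_kitaev_H)
  ultimately have "real_spec (kitaev_H \<theta> L w) - {ground_energy (kitaev_H \<theta> L w)} \<noteq> {}
      \<and> 2 * (2 * \<gamma>) \<le> spectral_gap (kitaev_H \<theta> L w)"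
    using assms by (intro spectral_gap_ge_if_real_spec_sign_sums[where k = 1]) auto
  thus "real_spec (kitaev_H \<theta> L w) - {ground_energy (kitaev_H \<theta> L w)} \<noteq> {}"
    and "spectral_gap (kitaev_H \<theta> L w) \<ge> 4 * \<gamma>" by simp_all
qed

end
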